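(* For $m\ge2$, the class of additive valuations on $[m]$ is pointwise $2(\log_2(m-1)+1)$-approximated by the class of constraint-homogeneous valuations: for every additive valuation $v$ and every nonempty $S\subseteq[m]$ there is a constraint-homogeneous valuation $v'$ with $2(\log_2(m-1)+1)\,v'(S)\ge v(S)$ and $v'(T)\le v(T)$ for all $T\subseteq[m]$.
   Context: A valuation $v$ on $2^{[m]}$ is additive if $v(T)=\sum_{j\in T}v_j$ for nonnegative numbers $v_j$. A valuation is constraint-homogeneous with interest set $S'$ and per-unit value $\hat v\ge0$ if $v(T)=\hat v|T\cap S'|$ for all $T\subseteq[m]$. A class $V$ is pointwise $\beta$-approximated by a class $V'$ if for every $v\in V$ and every $S\subseteq[m]$ there exists $v'\in V'$ (possibly depending on $S$) with $\beta v'(S)\ge v(S)$ and $v(T)\ge v'(T)$ for all $T\subseteq[m]$. *)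

theory Defs
  imports Complex_Main
begin

definition additive_val :: "nat \<Rightarrow> (nat set \<Rightarrow> real) \<Rightarrow> bool" where
  "additive_val m v \<longleftrightarrow> (\<exists>w :: nat \<Rightarrow> real. (\<forall>j\<in>{1..m}. w j \<ge> 0) \<and>
      (\<forall>T. T \<subseteq> {1..m} \<longrightarrow> v T = (\<Sum>j\<in>T. w j)))"

definition constraint_homogeneous :: "nat \<Rightarrow> (nat set \<Rightarrow> real) \<Rightarrow> bool" where
  "constraint_homogeneous m v \<longleftrightarrow> (\<exists>S' vh. S' \<subseteq> {1..m} \<and> vh \<ge> (0::real) \<and>
      (\<forall>T. T \<subseteq> {1..m} \<longrightarrow> v T = vh * real (card (T \<inter> S'))))"

end

theory Submission
  imports Defs "HOL-Analysis.Harmonic_Numbers"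
begin

(* Write the additive valuation as v(T) = sum of weights w_j over T and fix S.
   For a threshold t = w_j with j in S, the "threshold valuation" with per-unit value t and
   interest set {i in S. t <= w_i} is constraint-homogeneous, lies pointwise below v, and its
   value on S is w_j times the number of items of S weighing at least w_j.
   If every such value is at most A, then the k-th heaviest item of S weighs at most A/k, so
   v(S) <= A * H(|S|) with H the harmonic numbers (proved by removing a lightest item).
   Choosing the threshold valuation of largest value on S and bounding
   H(|S|) <= H(m) <= 1 + ln m <= 2 (log2 (m - 1) + 1) gives the theorem. *)

lemma harm_le_one_plus_ln:
  assumes "n \<ge> 1"
  shows "harm n \<le> 1 + ln (real n)"
  \<comment> \<open>The sequence harm n - ln n decreases and starts at 1.\<close>
proof -
  obtain k where n: "n = Suc k" using assms by (cases n) auto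
  have "harm (Suc k) - ln (real (Suc k)) \<le> harm (Suc 0) - ln (real (Suc 0))"
    using decseqD[OF decseq_harm_diff_ln, of 0 k] by simp
  moreover have "harm (Suc 0) = (1::real)" by (simp add: harm_def)
  ultimately show ?thesis by (simp add: n)
qed

lemma harm_le_approximation_factor:
  assumes "m \<ge> 2"
  shows "harm m \<le> 2 * (log 2 (real m - 1) + 1)"
proof -
  have ln2: "ln (2::real) \<le> 1" using ln_le_minus_one[of "2::real"] by simp
  have ln_nonneg: "ln (real m - 1) \<ge> 0" using assms by simp
  have "harm m \<le> 1 + ln (real m)" using assms by (intro harm_le_one_plus_ln) auto
  also have "ln (real m) \<le> ln (2 * (real m - 1))" using assms by simp
  also have "\<dots> = ln 2 + ln (real m - 1)" using assms by (intro ln_mult_pos) auto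
  finally have "harm m \<le> 2 + ln (real m - 1)" using ln2 by simp
  moreover have "ln (real m - 1) \<le> log 2 (real m - 1)"
    using ln_nonneg ln2 by (simp add: log_def le_divide_eq mult_left_le)
  moreover have "log 2 (real m - 1) \<ge> 0" using ln_nonneg by (simp add: log_def)
  ultimately show ?thesis by simp
qed

lemma sum_le_harm_of_rank_bound:
  fixes w :: "'a \<Rightarrow> real"
  assumes "finite S" and "\<forall>j\<in>S. w j \<ge> 0"
    and "\<forall>j\<in>S. w j * real (card {i\<in>S. w j \<le> w i}) \<le> A"
  shows "sum w S \<le> A * harm (card S)"
  using assms
proof (induction "card S" arbitrary: S)
  case 0
  then show ?case by (simp add: harm_def)
next
  case (Suc n S)
  then have "S \<noteq> {}" by auto
  have "Min (w ` S) \<in> w ` S" using Suc.prems(1) \<open>S \<noteq> {}\<close> by simp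
  then obtain j0 where j0: "j0 \<in> S" and j0_min: "w j0 = Min (w ` S)" by auto
  have lightest: "\<forall>i\<in>S. w j0 \<le> w i" using j0_min Suc.prems(1) by simp
  \<comment> \<open>A lightest item is counted against all of S, so it weighs at most A / |S|.\<close>
  have "{i\<in>S. w j0 \<le> w i} = S" using lightest by auto
  then have "w j0 * real (Suc n) \<le> A" using Suc.prems(3) j0 Suc.hyps(2) by force
  then have light_bound: "w j0 \<le> A / real (Suc n)" by (simp add: field_simps)
  \<comment> \<open>Removing it keeps the hypothesis, since counts can only shrink.\<close>
  define S' where "S' = S - {j0}"
  have card_S': "n = card S'" unfolding S'_def using Suc.hyps(2) j0 by simp
  have rank_S': "\<forall>j\<in>S'. w j * real (card {i\<in>S'. w j \<le> w i}) \<le> A"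
  proof
    fix j assume j: "j \<in> S'"
    have "card {i\<in>S'. w j \<le> w i} \<le> card {i\<in>S. w j \<le> w i}"
      using Suc.prems(1) unfolding S'_def by (intro card_mono) auto
    then have "w j * real (card {i\<in>S'. w j \<le> w i}) \<le> w j * real (card {i\<in>S. w j \<le> w i})"
      using Suc.prems(2) j unfolding S'_def by (intro mult_left_mono) auto
    also have "\<dots> \<le> A" using Suc.prems(3) j unfolding S'_def by auto
    finally show "w j * real (card {i\<in>S'. w j \<le> w i}) \<le> A" .
  qed
  have IH: "sum w S' \<le> A * harm n"
    using Suc.hyps(1)[OF card_S'] Suc.prems(1,2) rank_S' card_S' unfolding S'_def by auto
  have "sum w S = w j0 + sum w S'"
    unfolding S'_def using Suc.prems(1) j0 by (simp add: sum.remove)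
  also have "\<dots> \<le> A / real (Suc n) + A * harm n" using light_bound IH by simp
  also have "\<dots> = A * harm (Suc n)" by (simp add: harm_Suc algebra_simps divide_inverse)
  finally show ?case using Suc.hyps(2) by simp
qed

definition threshold_val :: "(nat \<Rightarrow> real) \<Rightarrow> nat set \<Rightarrow> real \<Rightarrow> nat set \<Rightarrow> real" where
  "threshold_val w S t T = t * real (card (T \<inter> {i\<in>S. t \<le> w i}))"

lemma threshold_val_constraint_homogeneous:
  assumes "S \<subseteq> {1..m}" and "t \<ge> 0"
  shows "constraint_homogeneous m (threshold_val w S t)"
  using assms unfolding constraint_homogeneous_def threshold_val_def
  by (intro exI[of _ "{i\<in>S. t \<le> w i}"]) auto

lemma threshold_val_le_sum:
  assumes "finite T" and "\<forall>j\<in>T. w j \<ge> 0"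
  shows "threshold_val w S t T \<le> sum w T"
  \<comment> \<open>Every counted item weighs at least t, and the other items weigh at least 0.\<close>
proof -
  have "threshold_val w S t T = (\<Sum>j\<in>T \<inter> {i\<in>S. t \<le> w i}. t)"
    by (simp add: threshold_val_def)
  also have "\<dots> \<le> (\<Sum>j\<in>T \<inter> {i\<in>S. t \<le> w i}. w j)" by (intro sum_mono) auto
  also have "\<dots> \<le> sum w T" using assms by (intro sum_mono2) auto
  finally show ?thesis .
qed

lemma threshold_val_on_S:
  "threshold_val w S (w j) S = w j * real (card {i\<in>S. w j \<le> w i})"
  by (simp add: threshold_val_def Int_absorb1 subset_iff)

lemma best_threshold_val:
  assumes "finite S" and "S \<noteq> {}" and "\<forall>j\<in>S. w j \<ge> 0"
  obtains j where "j \<in> S" and "sum w S \<le> threshold_val w S (w j) S * harm (card S)"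
proof -
  let ?f = "\<lambda>j. threshold_val w S (w j) S"
  have "Max (?f ` S) \<in> ?f ` S" using assms(1,2) by simp
  then obtain j where j: "j \<in> S" and j_max: "?f j = Max (?f ` S)" by auto
  have best: "\<forall>i\<in>S. ?f i \<le> ?f j" using j_max assms(1) by simp
  have "sum w S \<le> ?f j * harm (card S)"
    using sum_le_harm_of_rank_bound[OF assms(1,3)] best by (simp add: threshold_val_on_S)
  then show ?thesis using j that by blast
qed

theorem mainTheorem12:
  fixes m :: nat and v :: "nat set \<Rightarrow> real" and S :: "nat set"
  assumes "m \<ge> 2"
    and "additive_val m v"
    and "S \<subseteq> {1..m}" and "S \<noteq> {}"
  shows "\<exists>v'. constraint_homogeneous m v' \<and>
           2 * (log 2 (real m - 1) + 1) * v' S \<ge> v S \<and>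
           (\<forall>T. T \<subseteq> {1..m} \<longrightarrow> v' T \<le> v T)"
proof -
  obtain w where w_nonneg: "\<forall>j\<in>{1..m}. w j \<ge> 0"
    and v_sum: "\<forall>T. T \<subseteq> {1..m} \<longrightarrow> v T = sum w T"
    using assms(2) unfolding additive_val_def by blast
  have "finite S" using assms(3) by (rule finite_subset) simp
  moreover have "\<forall>j\<in>S. w j \<ge> 0" using assms(3) w_nonneg by auto
  ultimately obtain j where j: "j \<in> S"
    and approx: "sum w S \<le> threshold_val w S (w j) S * harm (card S)"
    using best_threshold_val[OF _ assms(4)] by blast
  let ?v' = "threshold_val w S (w j)"
  have below: "\<forall>T. T \<subseteq> {1..m} \<longrightarrow> ?v' T \<le> v T"
  proof (intro allI impI)
    fix T assume T: "T \<subseteq> {1..m}"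
    then have "finite T" by (rule finite_subset) simp
    then have "?v' T \<le> sum w T" using T w_nonneg by (intro threshold_val_le_sum) auto
    then show "?v' T \<le> v T" using v_sum T by simp
  qed
  have "harm (card S) \<le> (harm m :: real)"
    using card_mono[OF _ assms(3)] by (intro harm_mono) simp
  also have "\<dots> \<le> 2 * (log 2 (real m - 1) + 1)" using harm_le_approximation_factor assms(1) .
  finally have "?v' S * harm (card S) \<le> ?v' S * (2 * (log 2 (real m - 1) + 1))"
    using j w_nonneg assms(3) by (intro mult_left_mono) (auto simp: threshold_val_def)
  then have "v S \<le> 2 * (log 2 (real m - 1) + 1) * ?v' S"
    using approx v_sum assms(3) by (simp add: mult.commute)
  moreover have "constraint_homogeneous m ?v'"
    using j w_nonneg assms(3) by (intro threshold_val_constraint_homogeneous) auto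
  ultimately show ?thesis using below by blast
qed

end
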